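(* Let $B$ be a Horn program, $E^+,E^-$ finite sets of ground atoms, and $H,H'\in\mathcal{H}_{D,C}$ hypotheses with $H'$ a specialization of $H$. If $size(H') > fp(H,B,E^-) + size(H)$, then $S_{MDL}(H,B,E^+,E^-) > S_{MDL}(H',B,E^+,E^-)$.
   Context: A definite clause is a clause with exactly one positive literal. A hypothesis is a finite set of definite clauses; $\mathcal{H}_{D,C}$ denotes the hypothesis space of hypotheses consistent with a declaration bias $D$ and hypothesis constraints $C$ (only membership matters). $size(H)$ is the total number of literals in $H$. $B$ is background knowledge, $E^+$ positive and $E^-$ negative examples. For a hypothesis $H$: $tp(H,B,E^+)=|\{e\in E^+ : H\cup B\models e\}|$, $tn(H,B,E^-)=|\{e\in E^- : H\cup B\not\models e\}|$, $fp(H,B,E^-)=|E^-|-tn(H,B,E^-)$, and $S_{MDL}(H,B,E^+,E^-)=tp(H,B,E^+)+tn(H,B,E^-)-size(H)$. A clause $C_1$ subsumes a clause $C_2$ iff there is a substitution $\theta$ with $C_1\theta\subseteq C_2$. A clausal theory $T_1$ subsumes $T_2$ ($T_1\preceq T_2$) iff every clause of $T_2$ is subsumed by some clause of $T_1$. $T_1$ is a generalization of $T_2$ iff $T_1\preceq T_2$, and a specialization of $T_2$ iff $T_2\preceq T_1$. *)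

theory Defs
  imports Main
begin

datatype ('f, 'v) trm = Var 'v | Fn 'f "('f, 'v) trm list"

datatype ('p, 'f, 'v) atom = Atom 'p "('f, 'v) trm list"

datatype ('p, 'f, 'v) lit = Pos "('p, 'f, 'v) atom" | Neg "('p, 'f, 'v) atom"

text \<open>A clause is a (finite) set of literals, read as their disjunction,
  with all variables implicitly universally quantified.\<close>
type_synonym ('p, 'f, 'v) clause = "('p, 'f, 'v) lit set"

fun vars_trm :: "('f, 'v) trm \<Rightarrow> 'v set" where
  "vars_trm (Var v) = {v}"
| "vars_trm (Fn f ts) = (\<Union>t\<in>set ts. vars_trm t)"

fun subst_trm :: "('v \<Rightarrow> ('f, 'w) trm) \<Rightarrow> ('f, 'v) trm \<Rightarrow> ('f, 'w) trm" where
  "subst_trm \<sigma> (Var v) = \<sigma> v"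
| "subst_trm \<sigma> (Fn f ts) = Fn f (map (subst_trm \<sigma>) ts)"

fun subst_atom :: "('v \<Rightarrow> ('f, 'w) trm) \<Rightarrow> ('p, 'f, 'v) atom \<Rightarrow> ('p, 'f, 'w) atom" where
  "subst_atom \<sigma> (Atom p ts) = Atom p (map (subst_trm \<sigma>) ts)"

fun subst_lit :: "('v \<Rightarrow> ('f, 'w) trm) \<Rightarrow> ('p, 'f, 'v) lit \<Rightarrow> ('p, 'f, 'w) lit" where
  "subst_lit \<sigma> (Pos a) = Pos (subst_atom \<sigma> a)"
| "subst_lit \<sigma> (Neg a) = Neg (subst_atom \<sigma> a)"

definition subst_clause :: "('v \<Rightarrow> ('f, 'v) trm) \<Rightarrow> ('p, 'f, 'v) clause \<Rightarrow> ('p, 'f, 'v) clause" where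
  "subst_clause \<sigma> C = subst_lit \<sigma> ` C"

definition ground_trm :: "('f, 'v) trm \<Rightarrow> bool" where
  "ground_trm t \<longleftrightarrow> vars_trm t = {}"

fun ground_atom :: "('p, 'f, 'v) atom \<Rightarrow> bool" where
  "ground_atom (Atom p ts) \<longleftrightarrow> (\<forall>t\<in>set ts. ground_trm t)"

fun is_pos :: "('p, 'f, 'v) lit \<Rightarrow> bool" where
  "is_pos (Pos _) = True"
| "is_pos (Neg _) = False"

definition definite_clause :: "('p, 'f, 'v) clause \<Rightarrow> bool" where
  "definite_clause C \<longleftrightarrow> finite C \<and> card {L\<in>C. is_pos L} = 1"

definition horn_clause :: "('p, 'f, 'v) clause \<Rightarrow> bool" where
  "horn_clause C \<longleftrightarrow> finite C \<and> card {L\<in>C. is_pos L} \<le> 1"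

definition horn_program :: "('p, 'f, 'v) clause set \<Rightarrow> bool" where
  "horn_program B \<longleftrightarrow> finite B \<and> (\<forall>C\<in>B. horn_clause C)"

definition hypothesis :: "('p, 'f, 'v) clause set \<Rightarrow> bool" where
  "hypothesis H \<longleftrightarrow> finite H \<and> (\<forall>C\<in>H. definite_clause C)"

definition size_hyp :: "('p, 'f, 'v) clause set \<Rightarrow> nat" where
  "size_hyp H = (\<Sum>C\<in>H. card C)"

fun sat_lit :: "('p, 'f, 'v) atom set \<Rightarrow> ('p, 'f, 'v) lit \<Rightarrow> bool" where
  "sat_lit I (Pos a) \<longleftrightarrow> a \<in> I"
| "sat_lit I (Neg a) \<longleftrightarrow> a \<notin> I"

definition ground_subst :: "('v \<Rightarrow> ('f, 'v) trm) \<Rightarrow> bool" where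
  "ground_subst \<sigma> \<longleftrightarrow> (\<forall>v. ground_trm (\<sigma> v))"

definition sat_clause :: "('p, 'f, 'v) atom set \<Rightarrow> ('p, 'f, 'v) clause \<Rightarrow> bool" where
  "sat_clause I C \<longleftrightarrow> (\<forall>\<sigma>. ground_subst \<sigma> \<longrightarrow> (\<exists>L\<in>C. sat_lit I (subst_lit \<sigma> L)))"

definition herbrand_model :: "('p, 'f, 'v) atom set \<Rightarrow> ('p, 'f, 'v) clause set \<Rightarrow> bool" where
  "herbrand_model I T \<longleftrightarrow> I \<subseteq> {a. ground_atom a} \<and> (\<forall>C\<in>T. sat_clause I C)"

definition entails :: "('p, 'f, 'v) clause set \<Rightarrow> ('p, 'f, 'v) atom \<Rightarrow> bool" where
  "entails T e \<longleftrightarrow> (\<forall>I. herbrand_model I T \<longrightarrow> e \<in> I)"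

definition tp :: "('p, 'f, 'v) clause set \<Rightarrow> ('p, 'f, 'v) clause set \<Rightarrow> ('p, 'f, 'v) atom set \<Rightarrow> nat" where
  "tp H B Ep = card {e\<in>Ep. entails (H \<union> B) e}"

definition tn :: "('p, 'f, 'v) clause set \<Rightarrow> ('p, 'f, 'v) clause set \<Rightarrow> ('p, 'f, 'v) atom set \<Rightarrow> nat" where
  "tn H B En = card {e\<in>En. \<not> entails (H \<union> B) e}"

definition fp :: "('p, 'f, 'v) clause set \<Rightarrow> ('p, 'f, 'v) clause set \<Rightarrow> ('p, 'f, 'v) atom set \<Rightarrow> nat" where
  "fp H B En = card En - tn H B En"

definition S_MDL :: "('p, 'f, 'v) clause set \<Rightarrow> ('p, 'f, 'v) clause set \<Rightarrow> ('p, 'f, 'v) atom set \<Rightarrow> ('p, 'f, 'v) atom set \<Rightarrow> int" where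
  "S_MDL H B Ep En = int (tp H B Ep) + int (tn H B En) - int (size_hyp H)"

definition clause_subsumes :: "('p, 'f, 'v) clause \<Rightarrow> ('p, 'f, 'v) clause \<Rightarrow> bool" where
  "clause_subsumes C1 C2 \<longleftrightarrow> (\<exists>\<theta>. subst_clause \<theta> C1 \<subseteq> C2)"

definition theory_subsumes :: "('p, 'f, 'v) clause set \<Rightarrow> ('p, 'f, 'v) clause set \<Rightarrow> bool" where
  "theory_subsumes T1 T2 \<longleftrightarrow> (\<forall>C2\<in>T2. \<exists>C1\<in>T1. clause_subsumes C1 C2)"

definition specialization :: "('p, 'f, 'v) clause set \<Rightarrow> ('p, 'f, 'v) clause set \<Rightarrow> bool" where
  "specialization T1 T2 \<longleftrightarrow> theory_subsumes T2 T1"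

end

theory Submission
  imports Defs
begin

text \<open>Every model of a theory is a model of each theory it subsumes, so specializing \<open>H\<close> to
  \<open>H'\<close> can only lose entailed atoms: \<open>tp H' \<le> tp H\<close>. On the negative side \<open>tn H' \<le> |E\<^sup>-|\<close>, so
  \<open>tn H' - tn H \<le> fp H\<close>. Hence \<open>S(H') - S(H) \<le> fp H - (size H' - size H) < 0\<close>.\<close>

lemma subst_trm_subst_trm:
  "subst_trm \<sigma> (subst_trm \<theta> t) = subst_trm (\<lambda>v. subst_trm \<sigma> (\<theta> v)) t"
  by (induction t) auto

lemma vars_trm_subst_trm:
  "vars_trm (subst_trm \<sigma> t) = (\<Union>v\<in>vars_trm t. vars_trm (\<sigma> v))"
  by (induction t) auto

lemma subst_lit_subst_lit:
  "subst_lit \<sigma> (subst_lit \<theta> L) = subst_lit (\<lambda>v. subst_trm \<sigma> (\<theta> v)) L"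
proof (cases L)
  case (Pos a) then show ?thesis by (cases a) (simp add: subst_trm_subst_trm)
next
  case (Neg a) then show ?thesis by (cases a) (simp add: subst_trm_subst_trm)
qed

lemma ground_subst_comp:
  fixes \<theta> :: "'v \<Rightarrow> ('f, 'v) trm"
  assumes "ground_subst \<sigma>"
  shows "ground_subst (\<lambda>v. subst_trm \<sigma> (\<theta> v))"
  using assms unfolding ground_subst_def ground_trm_def by (simp add: vars_trm_subst_trm)

lemma sat_clause_if_subsumed:
  fixes C C' :: "('p, 'f, 'v) clause"
  assumes "clause_subsumes C C'" and "sat_clause I C"
  shows "sat_clause I C'"
  unfolding sat_clause_def
proof (intro allI impI)
  fix \<sigma> :: "'v \<Rightarrow> ('f, 'v) trm" assume "ground_subst \<sigma>"
  from assms(1) obtain \<theta> where \<theta>: "subst_clause \<theta> C \<subseteq> C'"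
    unfolding clause_subsumes_def by blast
  from assms(2) ground_subst_comp[OF \<open>ground_subst \<sigma>\<close>, of \<theta>] obtain L
    where "L \<in> C" and "sat_lit I (subst_lit (\<lambda>v. subst_trm \<sigma> (\<theta> v)) L)"
    unfolding sat_clause_def by blast
  moreover have "subst_lit \<theta> L \<in> C'"
    using \<theta> \<open>L \<in> C\<close> unfolding subst_clause_def by blast
  ultimately show "\<exists>L\<in>C'. sat_lit I (subst_lit \<sigma> L)"
    by (metis subst_lit_subst_lit)
qed

lemma herbrand_model_if_theory_subsumes:
  assumes "theory_subsumes T1 T2" and "herbrand_model I T1"
  shows "herbrand_model I T2"
  using assms sat_clause_if_subsumed
  unfolding herbrand_model_def theory_subsumes_def by blast

lemma entails_if_theory_subsumes:
  assumes "theory_subsumes T1 T2" and "entails T2 e"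
  shows "entails T1 e"
  using assms herbrand_model_if_theory_subsumes unfolding entails_def by blast

lemma subst_trm_Var: "subst_trm Var t = t"
  by (induction t) (auto simp: map_idI)

lemma subst_lit_Var: "subst_lit Var L = L"
proof (cases L)
  case (Pos a) then show ?thesis by (cases a) (simp add: subst_trm_Var map_idI)
next
  case (Neg a) then show ?thesis by (cases a) (simp add: subst_trm_Var map_idI)
qed

lemma clause_subsumes_refl: "clause_subsumes C C"
  unfolding clause_subsumes_def subst_clause_def by (auto intro!: exI[of _ Var] simp: subst_lit_Var)

lemma theory_subsumes_Un_right:
  assumes "theory_subsumes T1 T2"
  shows "theory_subsumes (T1 \<union> B) (T2 \<union> B)"
  using assms clause_subsumes_refl unfolding theory_subsumes_def by blast

lemma tp_specialization_le:
  assumes "specialization H' H" and "finite Ep"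
  shows "tp H' B Ep \<le> tp H B Ep"
proof -
  have "theory_subsumes (H \<union> B) (H' \<union> B)"
    using assms(1) theory_subsumes_Un_right unfolding specialization_def by blast
  then have "{e\<in>Ep. entails (H' \<union> B) e} \<subseteq> {e\<in>Ep. entails (H \<union> B) e}"
    using entails_if_theory_subsumes by blast
  then show ?thesis
    unfolding tp_def using assms(2) by (intro card_mono) auto
qed

lemma tn_le_card:
  assumes "finite En"
  shows "tn H B En \<le> card En"
  unfolding tn_def using assms by (intro card_mono) auto

theorem proposition4p13:
  fixes B H H' :: "('p, 'f, 'v) clause set"
    and Ep En :: "('p, 'f, 'v) atom set"
    and HDC :: "('p, 'f, 'v) clause set set"
  assumes "horn_program B"
    and "finite Ep" and "finite En"
    and "\<forall>e\<in>Ep. ground_atom e" and "\<forall>e\<in>En. ground_atom e"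
    and "\<forall>h\<in>HDC. hypothesis h"
    and "H \<in> HDC" and "H' \<in> HDC"
    and "specialization H' H"
    and "size_hyp H' > fp H B En + size_hyp H"
  shows "S_MDL H B Ep En > S_MDL H' B Ep En"
proof -
  have "tp H' B Ep \<le> tp H B Ep"
    using tp_specialization_le assms(9,2) .
  moreover have "tn H B En \<le> card En" and "tn H' B En \<le> card En"
    using tn_le_card assms(3) by blast+
  ultimately show ?thesis
    using assms(10) unfolding S_MDL_def fp_def by linarith
qed

end
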